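(* Let $N\ge 2$, $1\le K\le N-1$, $Z>0$ and $\delta>0$. Let $$U(x)=\sum_{j=1}^N-\frac{Z}{|x_j|}+\sum_{j\neq k}\frac{1}{|x_j-x_k|}.$$ Then for every $x\in\Omega$: - if $|x|_{N-K}>\delta|x|_{N-K+1}$, then $$U(x)\ge U_{N-K-1}(x)-\frac{Z}{\delta|x|_{N-K+1}}-\sum_{j=N-K+1}^N\frac{Z}{|x|_j};$$ - if $|x|_{N-K}<\delta|x|_{N-K+1}$, then $$U(x)\ge U_{N-K}(x)+\sum_{j=N-K+1}^N\Big(\frac{N-K}{1+\delta}-Z\Big)\frac{1}{|x|_j}.$$
   Context: For $x=(x_1,\dots,x_N)\in\mathbb R^{3N}$ with $x_j\in\mathbb R^3$, $|x|_k$ denotes the $k$-th smallest of $|x_1|,\dots,|x_N|$, counted with multiplicity, so that $|x|_1\le\dots\le|x|_N$. Let $\Omega=\{x\in\mathbb R^{3N}: |x|_1<|x|_2<\dots<|x|_N\}$. On $\Omega$, let $\tilde x_j$ denote the unique coordinate $x_i$ with $|x_i|=|x|_j$. For $0\le M\le N$, $$U_M(x)=\sum_{j=1}^M-\frac{Z}{|x|_j}+\sum_{j\neq k,\ j,k\le M}\frac{1}{|\tilde x_j-\tilde x_k|},$$ with $U_0=0$. This is the potential of the $M$ innermost electrons. *)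

theory Defs
  imports "HOL-Analysis.Analysis"
begin

text \<open>A configuration x = (x_1,...,x_N) in R^{3N} is a function
  x :: nat => real^3, where only x 0, ..., x (N-1) are relevant
  (coordinate x_j of the paper is x (j-1)).\<close>

definition rnorm :: "nat \<Rightarrow> (nat \<Rightarrow> real^3) \<Rightarrow> nat \<Rightarrow> real" where
  "rnorm N x k = sort (map (\<lambda>i. norm (x i)) [0..<N]) ! (k - 1)"

definition Omega :: "nat \<Rightarrow> (nat \<Rightarrow> real^3) set" where
  "Omega N = {x. \<forall>k. 1 \<le> k \<and> k < N \<longrightarrow> rnorm N x k < rnorm N x (Suc k)}"

text \<open>The coordinate x_i whose norm equals |x|_j (unique on Omega).\<close>
definition xt :: "nat \<Rightarrow> (nat \<Rightarrow> real^3) \<Rightarrow> nat \<Rightarrow> real^3" where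
  "xt N x j = (THE y. \<exists>i<N. y = x i \<and> norm (x i) = rnorm N x j)"

definition UM :: "nat \<Rightarrow> real \<Rightarrow> nat \<Rightarrow> (nat \<Rightarrow> real^3) \<Rightarrow> real" where
  "UM N Z M x = (\<Sum>j=1..M. - Z / rnorm N x j)
     + (\<Sum>j=1..M. \<Sum>k=1..M. if j \<noteq> k then 1 / norm (xt N x j - xt N x k) else 0)"

definition U :: "nat \<Rightarrow> real \<Rightarrow> (nat \<Rightarrow> real^3) \<Rightarrow> real" where
  "U N Z x = (\<Sum>j<N. - Z / norm (x j))
     + (\<Sum>j<N. \<Sum>k<N. if j \<noteq> k then 1 / norm (x j - x k) else 0)"

end

theory Submission
  imports Defs
begin

text \<open>On \<open>\<Omega>\<close> the radii are distinct, so sorting the electrons by distance from the nucleus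
  is a bijection and the full potential is \<open>U\<^sub>N\<close>. Dropping the nonnegative repulsions among
  the outer electrons leaves \<open>U\<^sub>M\<close> plus, for each outer electron, its nuclear attraction and
  its repulsion from the \<open>M\<close> inner ones. For a wide gap at \<open>M = N - K\<close> one also drops the
  repulsions of electron \<open>M\<close> and bounds its attraction \<open>Z/|x|_M\<close> by \<open>Z/(\<delta> |x|_(M+1))\<close>.
  For a narrow gap, an inner electron \<open>k\<close> and an outer one \<open>j\<close> are at distance at most
  \<open>|x|_j + |x|_k \<le> (1 + \<delta>) |x|_j\<close>, which bounds each of the \<open>M\<close> repulsions from below.\<close>

lemma rnorm_strict_mono:
  assumes "x \<in> Omega N" "1 \<le> a" "a < b" "b \<le> N"
  shows "rnorm N x a < rnorm N x b"
  using assms(3,4)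
proof (induction b)
  case (Suc b)
  have "rnorm N x b < rnorm N x (Suc b)"
    using assms(1,2) Suc.prems by (auto simp: Omega_def)
  then show ?case
    using Suc by (cases "a = b") auto
qed simp

lemma rnorm_mono:
  assumes "x \<in> Omega N" "1 \<le> a" "a \<le> b" "b \<le> N"
  shows "rnorm N x a \<le> rnorm N x b"
  using rnorm_strict_mono[OF assms(1,2) _ assms(4)] assms(3) by (cases "a = b") auto

lemma rnorm_inj:
  assumes "x \<in> Omega N" "1 \<le> a" "a \<le> N" "1 \<le> b" "b \<le> N" "rnorm N x a = rnorm N x b"
  shows "a = b"
  using rnorm_strict_mono[OF assms(1), of a b] rnorm_strict_mono[OF assms(1), of b a] assms
  by (cases a b rule: linorder_cases) auto

lemma rnorm_attained:
  assumes "1 \<le> j" "j \<le> N"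
  shows "\<exists>i<N. norm (x i) = rnorm N x j"
proof -
  let ?s = "sort (map (\<lambda>i. norm (x i)) [0..<N])"
  have "?s ! (j - 1) \<in> set ?s" using assms by (intro nth_mem) simp
  then show ?thesis unfolding rnorm_def by auto
qed

lemma rnorm_nonneg:
  assumes "1 \<le> j" "j \<le> N"
  shows "0 \<le> rnorm N x j"
  using rnorm_attained[OF assms, of x] by (metis norm_ge_zero)

lemma rnorm_pos:
  assumes "x \<in> Omega N" "2 \<le> j" "j \<le> N"
  shows "0 < rnorm N x j"
  using rnorm_strict_mono[OF assms(1), of 1 j] rnorm_nonneg[of 1 N x] assms by auto

lemma inj_on_norm_Omega:
  assumes "x \<in> Omega N"
  shows "inj_on (\<lambda>i. norm (x i)) {..<N}"
proof -
  let ?l = "map (\<lambda>i. norm (x i)) [0..<N]"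
  have "distinct (sort ?l)"
  proof (subst distinct_conv_nth, intro allI impI)
    fix a b assume "a < length (sort ?l)" "b < length (sort ?l)" "a \<noteq> b"
    then have "rnorm N x (Suc a) \<noteq> rnorm N x (Suc b)"
      using rnorm_inj[OF assms, of "Suc a" "Suc b"] by auto
    then show "sort ?l ! a \<noteq> sort ?l ! b" unfolding rnorm_def by simp
  qed
  then show ?thesis by (simp add: distinct_map atLeast0LessThan)
qed

definition rank_index :: "nat \<Rightarrow> (nat \<Rightarrow> real^3) \<Rightarrow> nat \<Rightarrow> nat" where
  "rank_index N x j = (THE i. i < N \<and> norm (x i) = rnorm N x j)"

lemma rank_index:
  assumes "x \<in> Omega N" "1 \<le> j" "j \<le> N"
  shows "rank_index N x j < N" "norm (x (rank_index N x j)) = rnorm N x j"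
proof -
  obtain i where i: "i < N" "norm (x i) = rnorm N x j"
    using rnorm_attained[OF assms(2,3)] by blast
  have "rank_index N x j = i"
    unfolding rank_index_def
  proof (rule the_equality)
    fix i' assume "i' < N \<and> norm (x i') = rnorm N x j"
    with i show "i' = i" using inj_on_norm_Omega[OF assms(1)] by (auto simp: inj_on_def)
  qed (use i in simp)
  with i show "rank_index N x j < N" "norm (x (rank_index N x j)) = rnorm N x j" by simp_all
qed

lemma xt_eq_rank_index:
  assumes "x \<in> Omega N" "1 \<le> j" "j \<le> N"
  shows "xt N x j = x (rank_index N x j)"
  unfolding xt_def
proof (rule the_equality)
  show "\<exists>i<N. x (rank_index N x j) = x i \<and> norm (x i) = rnorm N x j"
    using rank_index[OF assms] by blast
next
  fix y assume "\<exists>i<N. y = x i \<and> norm (x i) = rnorm N x j"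
  then show "y = x (rank_index N x j)"
    using rank_index[OF assms] inj_on_norm_Omega[OF assms(1)] by (metis lessThan_iff inj_onD)
qed

lemma norm_xt:
  assumes "x \<in> Omega N" "1 \<le> j" "j \<le> N"
  shows "norm (xt N x j) = rnorm N x j"
  using xt_eq_rank_index[OF assms] rank_index[OF assms] by simp

lemma bij_betw_rank_index:
  assumes "x \<in> Omega N"
  shows "bij_betw (rank_index N x) {1..N} {..<N}"
proof -
  have inj: "inj_on (rank_index N x) {1..N}"
    by (rule inj_onI) (metis atLeastAtMost_iff rank_index(2)[OF assms] rnorm_inj[OF assms])
  have "rank_index N x ` {1..N} \<subseteq> {..<N}"
    using rank_index(1)[OF assms] by auto
  moreover have "card (rank_index N x ` {1..N}) = card {..<N}"
    using card_image[OF inj] by simp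
  ultimately have "rank_index N x ` {1..N} = {..<N}"
    by (intro card_subset_eq) simp_all
  with inj show ?thesis unfolding bij_betw_def by blast
qed

definition repulsion :: "nat \<Rightarrow> (nat \<Rightarrow> real^3) \<Rightarrow> nat \<Rightarrow> nat \<Rightarrow> real" where
  "repulsion N x j k = (if j \<noteq> k then 1 / norm (xt N x j - xt N x k) else 0)"

lemma repulsion_nonneg: "0 \<le> repulsion N x j k"
  by (simp add: repulsion_def)

lemma UM_repulsion:
  "UM N Z M x = (\<Sum>j=1..M. - Z / rnorm N x j) + (\<Sum>j=1..M. \<Sum>k=1..M. repulsion N x j k)"
  unfolding UM_def repulsion_def ..

lemma U_eq_UM_all:
  assumes "x \<in> Omega N"
  shows "U N Z x = UM N Z N x"
proof -
  let ?\<sigma> = "rank_index N x"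
  note bij = bij_betw_rank_index[OF assms]
  have reindex: "(\<Sum>i<N. g i) = (\<Sum>j=1..N. g (?\<sigma> j))" for g :: "nat \<Rightarrow> real"
    using sum.reindex_bij_betw[OF bij, of g] by simp
  have "U N Z x = (\<Sum>j=1..N. - Z / norm (x (?\<sigma> j))) + (\<Sum>j=1..N. \<Sum>k=1..N.
      if ?\<sigma> j \<noteq> ?\<sigma> k then 1 / norm (x (?\<sigma> j) - x (?\<sigma> k)) else 0)"
    unfolding U_def by (simp add: reindex)
  also have "\<dots> = UM N Z N x"
    unfolding UM_def
  proof (intro arg_cong2[where f = "(+)"] sum.cong refl)
    fix j assume "j \<in> {1..N}"
    then show "- Z / norm (x (?\<sigma> j)) = - Z / rnorm N x j"
      using rank_index(2)[OF assms] by simp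
  next
    fix j k assume "j \<in> {1..N}" "k \<in> {1..N}"
    then show "(if ?\<sigma> j \<noteq> ?\<sigma> k then 1 / norm (x (?\<sigma> j) - x (?\<sigma> k)) else 0)
        = (if j \<noteq> k then 1 / norm (xt N x j - xt N x k) else 0)"
      using xt_eq_rank_index[OF assms] bij_betw_imp_inj_on[OF bij]
      by (auto dest: inj_onD)
  qed
  finally show ?thesis .
qed

lemma double_sum_ge_inner_block:
  fixes F :: "nat \<Rightarrow> nat \<Rightarrow> real"
  assumes "M \<le> L" "\<And>j k. 0 \<le> F j k"
  shows "(\<Sum>j=1..L. \<Sum>k=1..L. F j k)
    \<ge> (\<Sum>j=1..M. \<Sum>k=1..M. F j k) + (\<Sum>j=M+1..L. \<Sum>k=1..M. F j k)"
proof -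
  have "(\<Sum>j=1..M. \<Sum>k=1..M. F j k) + (\<Sum>j=M+1..L. \<Sum>k=1..M. F j k) = (\<Sum>j=1..L. \<Sum>k=1..M. F j k)"
    using sum.ub_add_nat[of 1 M "\<lambda>j. \<Sum>k=1..M. F j k" "L - M"] assms(1) by simp
  also have "\<dots> \<le> (\<Sum>j=1..L. \<Sum>k=1..L. F j k)"
    using assms by (intro sum_mono sum_mono2) auto
  finally show ?thesis .
qed

lemma UM_ge_UM_inner:
  assumes "M \<le> L"
  shows "UM N Z L x
    \<ge> UM N Z M x + (\<Sum>j=M+1..L. - Z / rnorm N x j + (\<Sum>k=1..M. repulsion N x j k))"
proof -
  have "(\<Sum>j=1..L. - Z / rnorm N x j) = (\<Sum>j=1..M. - Z / rnorm N x j) + (\<Sum>j=M+1..L. - Z / rnorm N x j)"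
    using sum.ub_add_nat[of 1 M _ "L - M"] assms by simp
  moreover have "(\<Sum>j=M+1..L. - Z / rnorm N x j + (\<Sum>k=1..M. repulsion N x j k))
      = (\<Sum>j=M+1..L. - Z / rnorm N x j) + (\<Sum>j=M+1..L. \<Sum>k=1..M. repulsion N x j k)"
    by (rule sum.distrib)
  ultimately show ?thesis
    using double_sum_ge_inner_block[where F = "repulsion N x", OF assms repulsion_nonneg]
    unfolding UM_repulsion by linarith
qed

lemma repulsion_ge_across_gap:
  assumes "x \<in> Omega N" "\<delta> > 0" "rnorm N x M < \<delta> * rnorm N x (M + 1)"
    and "1 \<le> k" "k \<le> M" "M < j" "j \<le> N"
  shows "1 / ((1 + \<delta>) * rnorm N x j) \<le> repulsion N x j k"
proof -
  have "norm (xt N x j - xt N x k) \<le> rnorm N x j + rnorm N x k"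
    using norm_triangle_ineq4[of "xt N x j" "xt N x k"] norm_xt[OF assms(1)] assms(4-7) by simp
  also have "\<dots> \<le> (1 + \<delta>) * rnorm N x j"
  proof -
    have "rnorm N x k \<le> rnorm N x M" "rnorm N x (M + 1) \<le> rnorm N x j"
      using rnorm_mono[OF assms(1)] assms(4-7) by simp_all
    then have "rnorm N x k \<le> \<delta> * rnorm N x j"
      using assms(2,3) mult_left_mono[of "rnorm N x (M + 1)" "rnorm N x j" \<delta>] by linarith
    then show ?thesis by (simp add: algebra_simps)
  qed
  finally have le: "norm (xt N x j - xt N x k) \<le> (1 + \<delta>) * rnorm N x j" .
  have "rnorm N x k \<noteq> rnorm N x j"
    using rnorm_inj[OF assms(1), of k j] assms(4-7) by auto
  then have "xt N x j \<noteq> xt N x k"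
    using norm_xt[OF assms(1), of j] norm_xt[OF assms(1), of k] assms(4-7) by auto
  then have "0 < norm (xt N x j - xt N x k)"
    by simp
  with le show ?thesis
    using assms(5,6) by (simp add: repulsion_def frac_le)
qed

lemma U_ge_UM_wide_gap:
  assumes "x \<in> Omega N" "1 \<le> M" "M < N" "0 \<le> Z" "\<delta> > 0"
    and gap: "\<delta> * rnorm N x (M + 1) < rnorm N x M"
  shows "U N Z x \<ge> UM N Z (M - 1) x - Z / (\<delta> * rnorm N x (M + 1))
                      - (\<Sum>j=M+1..N. Z / rnorm N x j)"
proof -
  let ?r = "rnorm N x"
  have "0 < \<delta> * ?r (M + 1)"
    using assms(5) rnorm_pos[OF assms(1), of "M + 1"] assms(2,3) by simp
  then have "Z / ?r M \<le> Z / (\<delta> * ?r (M + 1))"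
    using gap assms(4) by (intro divide_left_mono) auto
  moreover have "(\<Sum>j=M..N. - Z / ?r j + (\<Sum>k=1..M-1. repulsion N x j k)) \<ge> (\<Sum>j=M..N. - Z / ?r j)"
    by (intro sum_mono) (simp add: sum_nonneg repulsion_nonneg)
  moreover have "(\<Sum>j=M..N. - Z / ?r j) = - Z / ?r M - (\<Sum>j=M+1..N. Z / ?r j)"
    using assms(3) by (simp add: sum.atLeast_Suc_atMost sum_negf)
  moreover have "U N Z x \<ge> UM N Z (M - 1) x + (\<Sum>j=M..N. - Z / ?r j + (\<Sum>k=1..M-1. repulsion N x j k))"
    using U_eq_UM_all[OF assms(1)] UM_ge_UM_inner[of "M - 1" N N Z x] assms(2,3) by simp
  ultimately show ?thesis by simp
qed

lemma U_ge_UM_narrow_gap: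
  assumes "x \<in> Omega N" "M \<le> N" "\<delta> > 0"
    and gap: "rnorm N x M < \<delta> * rnorm N x (M + 1)"
  shows "U N Z x \<ge> UM N Z M x + (\<Sum>j=M+1..N. (real M / (1 + \<delta>) - Z) * (1 / rnorm N x j))"
proof -
  let ?r = "rnorm N x"
  have "(real M / (1 + \<delta>) - Z) * (1 / ?r j) \<le> - Z / ?r j + (\<Sum>k=1..M. repulsion N x j k)"
    if "j \<in> {M+1..N}" for j
  proof -
    have "(\<Sum>k=1..M. 1 / ((1 + \<delta>) * ?r j)) \<le> (\<Sum>k=1..M. repulsion N x j k)"
      using repulsion_ge_across_gap[OF assms(1,3) gap] that by (intro sum_mono) auto
    then show ?thesis by (simp add: algebra_simps)
  qed
  then have "(\<Sum>j=M+1..N. (real M / (1 + \<delta>) - Z) * (1 / ?r j))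
      \<le> (\<Sum>j=M+1..N. - Z / ?r j + (\<Sum>k=1..M. repulsion N x j k))"
    by (rule sum_mono)
  then show ?thesis
    using U_eq_UM_all[OF assms(1)] UM_ge_UM_inner[OF assms(2), of N Z x] by simp
qed

theorem lemma3:
  fixes N K :: nat and Z \<delta> :: real and x :: "nat \<Rightarrow> real^3"
  assumes "N \<ge> 2" and "1 \<le> K" and "K \<le> N - 1" and "Z > 0" and "\<delta> > 0"
    and "x \<in> Omega N"
  shows "(rnorm N x (N - K) > \<delta> * rnorm N x (N - K + 1) \<longrightarrow>
            U N Z x \<ge> UM N Z (N - K - 1) x - Z / (\<delta> * rnorm N x (N - K + 1))
                       - (\<Sum>j=N-K+1..N. Z / rnorm N x j))
       \<and> (rnorm N x (N - K) < \<delta> * rnorm N x (N - K + 1) \<longrightarrow>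
            U N Z x \<ge> UM N Z (N - K)  x
                       + (\<Sum>j=N-K+1..N. (real (N - K) / (1 + \<delta>) - Z) * (1 / rnorm N x j)))"
proof -
  have "1 \<le> N - K" "N - K < N" using assms(1-3) by auto
  then show ?thesis
    using U_ge_UM_wide_gap[OF assms(6), of "N - K" Z \<delta>]
          U_ge_UM_narrow_gap[OF assms(6), of "N - K" \<delta> Z] assms(4,5) by simp
qed

end
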